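(* Let $p\ge1$, $m=2p$, let $\{\beta(k)\}_{k\ge0}$ be $p\times m$ matrices with $\beta(k)J\beta(k)^*=I_p$, put $C_k=2K^*\beta(k)^*\beta(k)K-j$, and consider the system $W_{k+1}(\lambda)-W_k(\lambda)=-\frac{i}{\lambda}jC_kW_k(\lambda)$, $W_0=I_m$, on the semiaxis $k\ge0$. Let $\varphi_\infty$ be the unique element of $\bigcap_{N\ge0}\mathcal N(N)$. Then $\varphi_\infty$ is the unique Weyl function of this system on the semiaxis, i.e. the unique $p\times p$ matrix function $\varphi$ holomorphic in $\mathbb C_-$ such that for every $\lambda\in\mathbb C_-$ $$\sum_{k=0}^\infty[i\varphi(\lambda)^*\ \ I_p]\,q(\lambda)^kKW_k(\lambda)^*C_kW_k(\lambda)K^*\begin{bmatrix}-i\varphi(\lambda)\\ I_p\end{bmatrix}<\infty.$$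
   Context: $\mathbb C_-$ is the open lower half-plane; $q(\lambda)=|\lambda|^2(|\lambda|^2+1)^{-1}$; $j=\mathrm{diag}(I_p,-I_p)$, $J=\begin{bmatrix}0&I_p\\ I_p&0\end{bmatrix}$, $K=\frac1{\sqrt2}\begin{bmatrix}I_p&-I_p\\ I_p&I_p\end{bmatrix}$. The series condition means convergence of the series of positive semidefinite matrices. For $N\ge0$ let $\mathcal W(N,\lambda)=\{\mathcal W_{ij}(N,\lambda)\}_{i,j=1}^2=KW_{N+1}(\bar\lambda)^*$ ($p\times p$ blocks), and $\mathcal N(N)$ the set of $p\times p$ matrix functions holomorphic in $\mathbb C_-$ of the form $i(\mathcal W_{21}(N,\cdot)R+\mathcal W_{22}(N,\cdot)Q)(\mathcal W_{11}(N,\cdot)R+\mathcal W_{12}(N,\cdot)Q)^{-1}$, with $R,Q$ $p\times p$ matrix functions meromorphic in $\mathbb C_-$, well defined at $-i$, $R^*R+Q^*Q>0$, $R^*R\le Q^*Q$. (It is known that $\bigcap_N\mathcal N(N)$ consists of exactly one function.) *)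

theory Defs
  imports "HOL-Complex_Analysis.Complex_Analysis"
begin

text \<open>Matrices over the complex numbers are represented as HOL-Analysis
vectors of vectors: an r x c matrix is a term of type complex^'c^'r.
The dimension p is a finite type 'p; the dimension m = 2p is the type 'p + 'p,
the first p indices being Inl a and the last p indices being Inr a.\<close>

definition cmat_smult :: "complex \<Rightarrow> complex^'n^'m \<Rightarrow> complex^'n^'m" where
  "cmat_smult c A = (\<chi> i j. c * A $ i $ j)"

definition adj :: "complex^'n^'m \<Rightarrow> complex^'m^'n" where
  "adj A = (\<chi> i j. cnj (A $ j $ i))"

definition psd :: "complex^'n^'n \<Rightarrow> bool" where
  "psd A \<longleftrightarrow> (\<forall>x::complex^'n. (\<Sum>i\<in>UNIV. cnj (x $ i) * (A *v x) $ i) \<in> \<real> \<and>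
                 0 \<le> Re (\<Sum>i\<in>UNIV. cnj (x $ i) * (A *v x) $ i))"

definition pd :: "complex^'n^'n \<Rightarrow> bool" where
  "pd A \<longleftrightarrow> psd A \<and> (\<forall>x::complex^'n. x \<noteq> 0 \<longrightarrow> 0 < Re (\<Sum>i\<in>UNIV. cnj (x $ i) * (A *v x) $ i))"

definition loewner_le :: "complex^'n^'n \<Rightarrow> complex^'n^'n \<Rightarrow> bool" where
  "loewner_le A B \<longleftrightarrow> psd (B - A)"

definition block2 :: "complex^'p^'p \<Rightarrow> complex^'p^'p \<Rightarrow> complex^'p^'p \<Rightarrow> complex^'p^'p
    \<Rightarrow> complex^('p::finite + 'p)^('p + 'p)" where
  "block2 A B C D = (\<chi> i j. case i of
       Inl a \<Rightarrow> (case j of Inl b \<Rightarrow> A $ a $ b | Inr b \<Rightarrow> B $ a $ b)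
     | Inr a \<Rightarrow> (case j of Inl b \<Rightarrow> C $ a $ b | Inr b \<Rightarrow> D $ a $ b))"

definition blk11 :: "complex^('p + 'p)^('p + 'p) \<Rightarrow> complex^'p^'p" where
  "blk11 M = (\<chi> a b. M $ Inl a $ Inl b)"
definition blk12 :: "complex^('p + 'p)^('p + 'p) \<Rightarrow> complex^'p^'p" where
  "blk12 M = (\<chi> a b. M $ Inl a $ Inr b)"
definition blk21 :: "complex^('p + 'p)^('p + 'p) \<Rightarrow> complex^'p^'p" where
  "blk21 M = (\<chi> a b. M $ Inr a $ Inl b)"
definition blk22 :: "complex^('p + 'p)^('p + 'p) \<Rightarrow> complex^'p^'p" where
  "blk22 M = (\<chi> a b. M $ Inr a $ Inr b)"

definition row2 :: "complex^'p^'p \<Rightarrow> complex^'p^'p \<Rightarrow> complex^('p + 'p)^'p" where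
  "row2 A B = (\<chi> a j. case j of Inl b \<Rightarrow> A $ a $ b | Inr b \<Rightarrow> B $ a $ b)"
definition col2 :: "complex^'p^'p \<Rightarrow> complex^'p^'p \<Rightarrow> complex^'p^('p + 'p)" where
  "col2 A B = (\<chi> i b. case i of Inl a \<Rightarrow> A $ a $ b | Inr a \<Rightarrow> B $ a $ b)"

definition jmat :: "complex^('p::finite + 'p)^('p + 'p)" where
  "jmat = block2 (mat 1) 0 0 (- mat 1)"
definition Jmat :: "complex^('p::finite + 'p)^('p + 'p)" where
  "Jmat = block2 0 (mat 1) (mat 1) 0"
definition Kmat :: "complex^('p::finite + 'p)^('p + 'p)" where
  "Kmat = cmat_smult (1 / complex_of_real (sqrt 2)) (block2 (mat 1) (- mat 1) (mat 1) (mat 1))"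

definition lhp :: "complex set" where
  "lhp = {z. Im z < 0}"
definition qfun :: "complex \<Rightarrow> real" where
  "qfun z = (cmod z)^2 / ((cmod z)^2 + 1)"

definition Cmat :: "(nat \<Rightarrow> complex^('p::finite + 'p)^'p) \<Rightarrow> nat \<Rightarrow> complex^('p::finite + 'p)^('p + 'p)" where
  "Cmat \<beta> k = cmat_smult 2 (adj Kmat ** adj (\<beta> k) ** \<beta> k ** Kmat) - jmat"

primrec Wsol :: "(nat \<Rightarrow> complex^('p::finite + 'p)^'p) \<Rightarrow> nat \<Rightarrow> complex \<Rightarrow> complex^('p::finite + 'p)^('p + 'p)" where
  "Wsol \<beta> 0 z = mat 1"
| "Wsol \<beta> (Suc k) z = Wsol \<beta> k z - cmat_smult (\<i> / z) (jmat ** Cmat \<beta> k ** Wsol \<beta> k z)"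

definition mat_holomorphic_on :: "(complex \<Rightarrow> complex^'n^'m) \<Rightarrow> complex set \<Rightarrow> bool" where
  "mat_holomorphic_on F S \<longleftrightarrow> (\<forall>i j. (\<lambda>z. F z $ i $ j) holomorphic_on S)"
definition mat_meromorphic_on :: "(complex \<Rightarrow> complex^'n^'m) \<Rightarrow> complex set \<Rightarrow> bool" where
  "mat_meromorphic_on F S \<longleftrightarrow> (\<forall>i j. (\<lambda>z. F z $ i $ j) meromorphic_on S)"
definition mat_analytic_at :: "(complex \<Rightarrow> complex^'n^'m) \<Rightarrow> complex \<Rightarrow> bool" where
  "mat_analytic_at F z \<longleftrightarrow> (\<forall>i j. (\<lambda>w. F w $ i $ j) analytic_on {z})"

definition Wcal :: "(nat \<Rightarrow> complex^('p::finite + 'p)^'p) \<Rightarrow> nat \<Rightarrow> complex \<Rightarrow> complex^('p::finite + 'p)^('p + 'p)" where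
  "Wcal \<beta> N z = Kmat ** adj (Wsol \<beta> (Suc N) (cnj z))"

definition Ncal :: "(nat \<Rightarrow> complex^('p::finite + 'p)^'p) \<Rightarrow> nat \<Rightarrow> (complex \<Rightarrow> complex^'p^'p) set" where
  "Ncal \<beta> N = {\<phi>. mat_holomorphic_on \<phi> lhp \<and>
     (\<exists>R Q :: complex \<Rightarrow> complex^'p^'p.
        mat_meromorphic_on R lhp \<and> mat_meromorphic_on Q lhp \<and>
        mat_analytic_at R (-\<i>) \<and> mat_analytic_at Q (-\<i>) \<and>
        (\<forall>z\<in>lhp. mat_analytic_at R z \<and> mat_analytic_at Q z \<longrightarrow>
           pd (adj (R z) ** R z + adj (Q z) ** Q z) \<and>
           loewner_le (adj (R z) ** R z) (adj (Q z) ** Q z) \<and>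
           invertible (blk11 (Wcal \<beta> N z) ** R z + blk12 (Wcal \<beta> N z) ** Q z) \<and>
           \<phi> z = cmat_smult \<i> ((blk21 (Wcal \<beta> N z) ** R z + blk22 (Wcal \<beta> N z) ** Q z) **
                    matrix_inv (blk11 (Wcal \<beta> N z) ** R z + blk12 (Wcal \<beta> N z) ** Q z))))}"

definition weyl_function :: "(nat \<Rightarrow> complex^('p::finite + 'p)^'p) \<Rightarrow> (complex \<Rightarrow> complex^'p^'p) \<Rightarrow> bool" where
  "weyl_function \<beta> \<phi> \<longleftrightarrow> mat_holomorphic_on \<phi> lhp \<and>
     (\<forall>z\<in>lhp. summable (\<lambda>k.
        row2 (cmat_smult \<i> (adj (\<phi> z))) (mat 1) **
        ((qfun z ^ k) *\<^sub>R (Kmat ** adj (Wsol \<beta> k z) ** Cmat \<beta> k ** Wsol \<beta> k z ** adj Kmat)) **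
        col2 (cmat_smult (-\<i>) (\<phi> z)) (mat 1)))"

end

theory Submission
  imports Defs
begin

text \<open>Put \<open>u = K\<^sup>* [-i \<phi>(\<lambda>) y; y]\<close>; the Weyl series, as a quadratic form in \<open>y\<close>, has
  the terms \<open>t\<^sub>k = q\<^sup>k (W\<^sub>k u)\<^sup>* C\<^sub>k (W\<^sub>k u)\<close>. The normalisation \<open>\<beta>(k) J \<beta>(k)\<^sup>* = I\<close>
  makes \<open>j C\<^sub>k\<close> an involution and gives \<open>C\<^sub>k \<ge> j\<close>, \<open>C\<^sub>k \<ge> 0\<close>, hence the growth identity
  \<open>q\<^sup>n (W\<^sub>n u)\<^sup>* j (W\<^sub>n u) = u\<^sup>* j u + \<epsilon> (t\<^sub>0 + \<dots> + t\<^sub>n\<^sub>-\<^sub>1)\<close>,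
  \<open>\<epsilon> = -2 Im \<lambda> / (|\<lambda>|\<^sup>2 + 1) > 0\<close>, whose left-hand side is at most \<open>t\<^sub>n\<close>.

  Existence: for \<open>\<phi> \<in> \<N>(N)\<close> the \<open>j\<close>-property \<open>W\<^sub>n(\<lambda>) j W\<^sub>n(conj \<lambda>)\<^sup>* = (1 + \<lambda>\<^sup>-\<^sup>2)\<^sup>n j\<close>
  together with \<open>R\<^sup>*R \<le> Q\<^sup>*Q\<close> gives \<open>(W\<^sub>N\<^sub>+\<^sub>1 u)\<^sup>* j (W\<^sub>N\<^sub>+\<^sub>1 u) \<le> 0\<close>, which bounds the
  partial sums. Uniqueness: convergence forces \<open>t\<^sub>n \<rightarrow> 0\<close>, hence \<open>u\<^sup>* j u \<le> 0\<close>. For two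
  Weyl functions \<open>\<phi>\<^sub>1, \<phi>\<^sub>2\<close> and a vector \<open>x\<close>, the \<open>p\<close>-dimensional space of vectors \<open>u\<close> built
  from \<open>\<phi>\<^sub>1\<close> and the vector \<open>u\<close> built from \<open>\<phi>\<^sub>2\<close> and \<open>x\<close> contain a nontrivial combination
  with vanishing lower block. Its \<open>j\<close>-form is \<open>\<ge> 0\<close>, so it vanishes, and this forces
  \<open>\<phi>\<^sub>1 x = \<phi>\<^sub>2 x\<close>.\<close>

definition cinner :: "complex^'n \<Rightarrow> complex^'n \<Rightarrow> complex" where
  "cinner x y = (\<Sum>i\<in>UNIV. cnj (x $ i) * y $ i)"

lemma cinner_add_left: "cinner (x + y) z = cinner x z + cinner y z"
  and cinner_add_right: "cinner x (y + z) = cinner x y + cinner x z"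
  and cinner_diff_left: "cinner (x - y) z = cinner x z - cinner y z"
  and cinner_diff_right: "cinner x (y - z) = cinner x y - cinner x z"
  and cinner_minus_right: "cinner x (- y) = - cinner x y"
  and cinner_smult_left: "cinner (c *s x) y = cnj c * cinner x y"
  and cinner_smult_right: "cinner x (c *s y) = c * cinner x y"
  and cinner_zero_left: "cinner 0 y = 0"
  and cinner_zero_right: "cinner x 0 = 0"
  by (simp_all add: cinner_def algebra_simps sum.distrib sum_subtractf sum_distrib_left sum_negf)

lemmas cinner_simps = cinner_add_left cinner_add_right cinner_diff_left cinner_diff_right
  cinner_minus_right cinner_smult_left cinner_smult_right cinner_zero_left cinner_zero_right

lemma cinner_commute: "cinner y x = cnj (cinner x y)"
  by (simp add: cinner_def mult.commute)

lemma cinner_scaleR_right: "cinner x (r *\<^sub>R y) = of_real r * cinner x y"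
  unfolding cinner_def vector_scaleR_component
  by (simp add: scaleR_conv_of_real sum_distrib_left algebra_simps)

lemma norm_vec_power2: "(norm (x :: 'a::real_normed_vector^'n))\<^sup>2 = (\<Sum>i\<in>UNIV. (norm (x $ i))\<^sup>2)"
  by (simp add: norm_vec_def L2_set_def sum_nonneg)

lemma norm_vector_smult: "norm (c *s (x :: 'a::real_normed_field^'n)) = norm c * norm x"
  by (simp add: norm_vec_def L2_set_right_distrib norm_mult)

lemma norm_parallelogram:
  fixes a b :: "'a::real_inner"
  shows "(norm (a + b))\<^sup>2 + (norm (a - b))\<^sup>2 = 2 * (norm a)\<^sup>2 + 2 * (norm b)\<^sup>2"
  by (simp add: power2_norm_eq_inner inner_add inner_diff inner_commute)

lemma cinner_self: "cinner x x = of_real ((norm x)\<^sup>2)"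
proof -
  have "cnj (x $ i) * x $ i = of_real ((norm (x $ i))\<^sup>2)" for i
    using complex_norm_square[of "x $ i"] by (simp add: mult.commute)
  then show ?thesis by (simp add: cinner_def norm_vec_power2)
qed

lemma adj_adj [simp]: "adj (adj A) = A"
  by (simp add: adj_def vec_eq_iff)

lemma adj_mult: "adj (A ** B) = adj B ** adj A"
  by (simp add: adj_def matrix_matrix_mult_def vec_eq_iff cnj_sum mult.commute)

lemma adj_diff: "adj (A - B) = adj A - adj B"
  and adj_uminus: "adj (- A) = - adj A"
  and adj_zero: "adj 0 = 0"
  and adj_mat_1: "adj (mat 1) = mat 1"
  and adj_cmat_smult: "adj (cmat_smult c A) = cmat_smult (cnj c) (adj A)"
  by (simp_all add: adj_def cmat_smult_def mat_def vec_eq_iff)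

lemma adj_block2: "adj (block2 A B C D) = block2 (adj A) (adj C) (adj B) (adj D)"
  by (simp add: adj_def block2_def vec_eq_iff split: sum.split)

lemma adj_col2: "adj (col2 A B) = row2 (adj A) (adj B)"
  by (simp add: adj_def col2_def row2_def vec_eq_iff split: sum.split)

lemma cinner_adj_right: "cinner x (adj M *v y) = cinner (M *v x) y"
  by (simp add: cinner_def adj_def matrix_vector_mult_def sum_distrib_left sum_distrib_right
      algebra_simps cnj_sum) (rule sum.swap)

lemma cinner_adj_left: "cinner (adj M *v x) y = cinner x (M *v y)"
  by (metis cinner_adj_right cinner_commute)

lemma cinner_mv_right: "cinner x (M *v y) = cinner (adj M *v x) y"
  by (metis adj_adj cinner_adj_right)

lemma cmat_smult_mv: "cmat_smult c A *v x = c *s (A *v x)"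
  by (simp add: cmat_smult_def matrix_vector_mult_def vec_eq_iff sum_distrib_left mult.assoc)

lemma uminus_mv: "(- A) *v x = - (A *v (x :: 'a::comm_ring_1^'n))"
  by (simp add: matrix_vector_mult_def vec_eq_iff sum_negf[symmetric])

lemma scaleR_mv: "(r *\<^sub>R A) *v x = r *\<^sub>R (A *v (x :: complex^'n))"
  by (simp add: matrix_vector_mult_def vec_eq_iff scaleR_sum_right)

lemma matrix_inv_right: "invertible A \<Longrightarrow> A ** matrix_inv A = mat 1"
  unfolding invertible_def matrix_inv_def by (metis (mono_tags, lifting) someI_ex)

lemma sum_UNIV_Plus:
  "(\<Sum>i\<in>(UNIV :: ('a::finite + 'b::finite) set). f i) = (\<Sum>a\<in>UNIV. f (Inl a)) + (\<Sum>b\<in>UNIV. f (Inr b))"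
  using sum.Plus[of UNIV UNIV f] by (simp add: comp_def)

lemma matrix_nontrivial_kernel:
  fixes A :: "'a::field^'n^'m"
  assumes "CARD('m) < CARD('n)"
  shows "\<exists>x. x \<noteq> 0 \<and> A *v x = 0"
proof (rule ccontr)
  assume "\<not> ?thesis"
  then have "inj ((*v) A)"
    using matrix_left_invertible_ker matrix_left_invertible_injective by metis
  then have "vec.dim ((*v) A ` UNIV) = vec.dim (UNIV :: ('a^'n) set)"
    by (intro vec.dim_image_eq[OF matrix_vector_mul_linear_gen]) (auto simp: inj_on_def)
  moreover have "vec.dim ((*v) A ` UNIV) \<le> CARD('m)"
    using vec.dim_subset_UNIV[of "(*v) A ` UNIV"] by (simp add: vec.dimension_def card_cart_basis)
  ultimately show False
    using assms vec_dim_card by (metis not_le)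
qed

lemma matrix_column_dependence:
  fixes M :: "'a::field^'n^'n" and w :: "'a^'n"
  shows "\<exists>y t. (y \<noteq> 0 \<or> t \<noteq> 0) \<and> M *v y + t *s w = 0"
proof -
  define A :: "'a^('n + unit)^'n" where
    "A = (\<chi> a b. case b of Inl c \<Rightarrow> M $ a $ c | Inr _ \<Rightarrow> w $ a)"
  obtain x where x: "x \<noteq> 0" "A *v x = 0"
    using matrix_nontrivial_kernel[of A] by (auto simp: card_UNIV_sum)
  define y where "y = (\<chi> c. x $ Inl c)"
  define t where "t = x $ Inr ()"
  have "A *v x = M *v y + t *s w"
    by (simp add: A_def y_def t_def matrix_vector_mult_def vec_eq_iff sum_UNIV_Plus UNIV_unit
        mult.commute)
  moreover have "y \<noteq> 0 \<or> t \<noteq> 0"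
  proof (rule ccontr)
    assume "\<not> ?thesis"
    then have "x $ b = 0" for b
      by (cases b) (auto simp: y_def t_def vec_eq_iff)
    with x(1) show False
      by (simp add: vec_eq_iff)
  qed
  ultimately show ?thesis
    using x(2) by metis
qed

definition vtop :: "'a^('p::finite + 'p) \<Rightarrow> 'a^'p" where
  "vtop x = (\<chi> a. x $ Inl a)"

definition vbot :: "'a^('p::finite + 'p) \<Rightarrow> 'a^'p" where
  "vbot x = (\<chi> a. x $ Inr a)"

definition vstack :: "'a^'p \<Rightarrow> 'a^'p \<Rightarrow> 'a^('p::finite + 'p)" where
  "vstack a b = (\<chi> i. case i of Inl k \<Rightarrow> a $ k | Inr k \<Rightarrow> b $ k)"

lemma vtop_vstack [simp]: "vtop (vstack a b) = a"
  and vbot_vstack [simp]: "vbot (vstack a b) = b"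
  by (simp_all add: vtop_def vbot_def vstack_def)

lemma vstack_vtop_vbot [simp]: "vstack (vtop x) (vbot x) = x"
  by (simp add: vtop_def vbot_def vstack_def vec_eq_iff split: sum.split)

lemma vstack_eq_iff: "vstack a b = x \<longleftrightarrow> a = vtop x \<and> b = vbot x"
  by (metis vbot_vstack vtop_vstack vstack_vtop_vbot)

lemma vstack_add: "vstack a b + vstack c d = vstack (a + c) (b + d)"
  and vstack_smult: "k *s vstack a b = vstack (k *s a) (k *s b)"
  by (simp_all add: vstack_def vec_eq_iff split: sum.split)

lemma vtop_add [simp]: "vtop (x + y) = vtop x + vtop y"
  and vbot_add [simp]: "vbot (x + y) = vbot x + vbot y"
  and vtop_diff [simp]: "vtop (x - y) = vtop x - vtop y"
  and vbot_diff [simp]: "vbot (x - y) = vbot x - vbot y"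
  and vtop_uminus [simp]: "vtop (- x) = - vtop x"
  and vbot_uminus [simp]: "vbot (- x) = - vbot x"
  and vtop_smult [simp]: "vtop (c *s x) = c *s vtop x"
  and vbot_smult [simp]: "vbot (c *s x) = c *s vbot x"
  and vtop_zero [simp]: "vtop 0 = 0"
  and vbot_zero [simp]: "vbot 0 = 0"
  by (simp_all add: vtop_def vbot_def vec_eq_iff)

lemma vstack_eq_0_iff: "vstack a b = 0 \<longleftrightarrow> a = 0 \<and> b = 0"
  by (simp add: vstack_eq_iff)

lemma cinner_vtop_vbot: "cinner x y = cinner (vtop x) (vtop y) + cinner (vbot x) (vbot y)"
  by (simp add: cinner_def sum_UNIV_Plus vtop_def vbot_def)

lemma block2_mv:
  "block2 A B C D *v x = vstack (A *v vtop x + B *v vbot x) (C *v vtop x + D *v vbot x)"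
  by (simp add: block2_def vstack_def vtop_def vbot_def matrix_vector_mult_def vec_eq_iff
      sum_UNIV_Plus split: sum.split)

lemma mv_vstack:
  "M *v vstack a b = vstack (blk11 M *v a + blk12 M *v b) (blk21 M *v a + blk22 M *v b)"
  by (simp add: blk11_def blk12_def blk21_def blk22_def vstack_def matrix_vector_mult_def
      vec_eq_iff sum_UNIV_Plus split: sum.split)

lemma col2_mv: "col2 A B *v x = vstack (A *v x) (B *v x)"
  by (simp add: col2_def vstack_def matrix_vector_mult_def vec_eq_iff split: sum.split)

lemma vtop_mv: "vtop (B *v y) = (\<chi> a c. B $ Inl a $ c) *v y"
  and vbot_mv: "vbot (B *v y) = (\<chi> a c. B $ Inr a $ c) *v y"
  by (simp_all add: vtop_def vbot_def matrix_vector_mult_def vec_eq_iff)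

definition jform :: "complex^('p::finite + 'p) \<Rightarrow> real" where
  "jform x = (norm (vtop x))\<^sup>2 - (norm (vbot x))\<^sup>2"

lemma jmat_mv: "jmat *v x = vstack (vtop x) (- vbot x)"
  by (simp add: jmat_def block2_mv uminus_mv)

lemma Jmat_mv: "Jmat *v x = vstack (vbot x) (vtop x)"
  by (simp add: Jmat_def block2_mv)

lemma adj_jmat: "adj jmat = jmat"
  by (simp add: jmat_def adj_block2 adj_mat_1 adj_zero adj_uminus)

lemma jmat_jmat_mv [simp]: "jmat *v (jmat *v x) = x"
  by (simp add: jmat_mv)

lemma Kmat_sandwich:
  fixes M :: "complex^('p::finite + 'p)^('p + 'p)"
  shows "Kmat *v (M *v (adj Kmat *v x)) =
      (1/2) *s (block2 (mat 1) (- mat 1) (mat 1) (mat 1) *v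
        (M *v (block2 (mat 1) (mat 1) (- mat 1) (mat 1) *v x)))"
    and "adj Kmat *v (M *v (Kmat *v x)) =
      (1/2) *s (block2 (mat 1) (mat 1) (- mat 1) (mat 1) *v
        (M *v (block2 (mat 1) (- mat 1) (mat 1) (mat 1) *v x)))"
  by (simp_all add: Kmat_def adj_cmat_smult adj_block2 adj_mat_1 adj_uminus cmat_smult_mv
      vector_scalar_commute vector_smult_assoc flip: of_real_mult)

lemma Kmat_adj_Kmat_mv [simp]: "Kmat *v (adj Kmat *v x) = x"
proof -
  have "Kmat *v (adj Kmat *v x) = Kmat *v (mat 1 *v (adj Kmat *v x))"
    by simp
  also have "\<dots> = x"
    unfolding Kmat_sandwich
    by (simp add: block2_mv uminus_mv vstack_smult vstack_eq_iff) (simp add: vec_eq_iff)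
  finally show ?thesis .
qed

lemma Kmat_jmat_adj_Kmat_mv: "Kmat *v (jmat *v (adj Kmat *v x)) = Jmat *v x"
  unfolding Kmat_sandwich
  by (simp add: block2_mv uminus_mv jmat_mv Jmat_mv vstack_smult vstack_eq_iff)
    (simp add: vec_eq_iff)

lemma adj_Kmat_Jmat_Kmat_mv: "adj Kmat *v (Jmat *v (Kmat *v x)) = jmat *v x"
  unfolding Kmat_sandwich
  by (simp add: block2_mv uminus_mv jmat_mv Jmat_mv vstack_smult vstack_eq_iff)
    (simp add: vec_eq_iff)

lemma cinner_jmat_self: "cinner x (jmat *v x) = of_real (jform x)"
  by (simp add: jmat_mv cinner_vtop_vbot[of x] cinner_simps cinner_self jform_def)

lemma cinner_jmat_left: "cinner (jmat *v x) y = cinner x (jmat *v y)"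
  by (metis adj_jmat cinner_adj_left)

lemma jform_vstack: "jform (vstack a b) = (norm a)\<^sup>2 - (norm b)\<^sup>2"
  by (simp add: jform_def)

lemma jform_smult: "jform (c *s x) = (cmod c)\<^sup>2 * jform x"
  by (simp add: jform_def norm_vector_smult power_mult_distrib algebra_simps)

lemma jform_jmat: "jform (jmat *v x) = jform x"
  by (simp add: jform_def jmat_mv)

section \<open>Kernels of normalised rows\<close>

lemma jform_jmat_adj_add:
  fixes g :: "complex^('p::finite + 'p)^'p"
  assumes g: "g ** jmat ** adj g = mat 1" and gz: "g *v z = 0"
  shows "jform (jmat *v (adj g *v y) + c *s z) = (norm y)\<^sup>2 + (cmod c)\<^sup>2 * jform z"
proof -
  have gjg: "g *v (jmat *v (adj g *v y)) = y"
    using g by (simp add: matrix_vector_mul_assoc matrix_mul_assoc)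
  let ?a = "jmat *v (adj g *v y)"
  have "of_real (jform (?a + c *s z)) = cinner (?a + c *s z) (adj g *v y + c *s (jmat *v z))"
    by (simp add: cinner_jmat_self[symmetric] matrix_vector_right_distrib vector_scalar_commute)
  also have "\<dots> = cinner y y + cnj c * c * cinner z (jmat *v z)"
    by (simp add: cinner_simps)
      (simp add: cinner_simps cinner_jmat_left cinner_adj_left cinner_adj_right gjg gz)
  also have "\<dots> = of_real ((norm y)\<^sup>2 + (cmod c)\<^sup>2 * jform z)"
    using complex_norm_square[of c] by (simp add: cinner_self cinner_jmat_self mult.commute)
  finally show ?thesis
    by (simp only: of_real_eq_iff)
qed

text \<open>The range of \<open>j g\<^sup>*\<close> is \<open>p\<close>-dimensional, \<open>j\<close>-positive and \<open>j\<close>-orthogonal to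
  \<open>ker g\<close>. A \<open>j\<close>-positive \<open>z \<in> ker g\<close> would enlarge it to a \<open>j\<close>-positive space of
  dimension \<open>p + 1\<close>, which would have to meet the \<open>p\<close>-dimensional space of vectors with
  vanishing upper block, where the \<open>j\<close>-form is \<open>\<le> 0\<close>.\<close>

lemma jform_nonpos_on_kernel:
  fixes g :: "complex^('p::finite + 'p)^'p"
  assumes g: "g ** jmat ** adj g = mat 1" and gz: "g *v z = 0"
  shows "jform z \<le> 0"
proof (rule ccontr)
  assume pos: "\<not> jform z \<le> 0"
  obtain y t where yt: "y \<noteq> 0 \<or> t \<noteq> 0"
    and top: "(\<chi> a c. (jmat ** adj g) $ Inl a $ c) *v y + t *s vtop z = 0"
    using matrix_column_dependence by blast
  define u where "u = jmat *v (adj g *v y) + t *s z"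
  have "vtop u = 0"
    using top by (simp add: u_def matrix_vector_mul_assoc vtop_mv)
  then have "jform u \<le> 0"
    by (simp add: jform_def)
  moreover have "jform u = (norm y)\<^sup>2 + (cmod t)\<^sup>2 * jform z"
    unfolding u_def by (rule jform_jmat_adj_add[OF g gz])
  moreover have "(norm y)\<^sup>2 + (cmod t)\<^sup>2 * jform z > 0"
    using yt pos by (cases "y = 0") (auto intro: add_pos_nonneg)
  ultimately show False
    by simp
qed

lemma jform_le_norm_power2:
  fixes g :: "complex^('p::finite + 'p)^'p"
  assumes g: "g ** jmat ** adj g = mat 1"
  shows "jform x \<le> (norm (g *v x))\<^sup>2"
proof -
  define z where "z = x - jmat *v (adj g *v (g *v x))"
  have "g *v z = 0"
    using g
    by (simp add: z_def matrix_vector_mult_diff_distrib matrix_vector_mul_assoc matrix_mul_assoc)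
  moreover have "x = jmat *v (adj g *v (g *v x)) + 1 *s z"
    by (simp add: z_def)
  ultimately have "jform x = (norm (g *v x))\<^sup>2 + jform z"
    using jform_jmat_adj_add[OF g] by (metis mult_1 norm_one power_one)
  with jform_nonpos_on_kernel[OF g \<open>g *v z = 0\<close>] show ?thesis
    by simp
qed

section \<open>The growth identity\<close>

definition Cform :: "(nat \<Rightarrow> complex^('p::finite + 'p)^'p) \<Rightarrow> nat \<Rightarrow> complex^('p + 'p) \<Rightarrow> real" where
  "Cform \<beta> k x = 2 * (norm ((\<beta> k ** Kmat) *v x))\<^sup>2 - jform x"

lemma Cmat_mv: "Cmat \<beta> k *v x = 2 *s (adj (\<beta> k ** Kmat) *v ((\<beta> k ** Kmat) *v x)) - jmat *v x"
  by (simp add: Cmat_def adj_mult matrix_vector_mult_diff_rdistrib cmat_smult_mv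
      matrix_vector_mul_assoc matrix_mul_assoc)

lemma adj_Cmat: "adj (Cmat \<beta> k) = Cmat \<beta> k"
  by (simp add: Cmat_def adj_diff adj_cmat_smult adj_jmat adj_mult matrix_mul_assoc)

lemma cinner_Cmat_left: "cinner (Cmat \<beta> k *v x) y = cinner x (Cmat \<beta> k *v y)"
  by (metis adj_Cmat cinner_adj_left)

lemma cinner_Cmat_self: "cinner x (Cmat \<beta> k *v x) = of_real (Cform \<beta> k x)"
  by (simp add: Cmat_mv Cform_def cinner_simps cinner_adj_right cinner_self cinner_jmat_self)

lemma Cform_smult: "Cform \<beta> k (c *s x) = (cmod c)\<^sup>2 * Cform \<beta> k x"
  by (simp add: Cform_def vector_scalar_commute norm_vector_smult jform_smult power_mult_distrib
      algebra_simps)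

lemma Cform_parallelogram:
  "Cform \<beta> k (a + b) + Cform \<beta> k (a - b) = 2 * Cform \<beta> k a + 2 * Cform \<beta> k b"
  using norm_parallelogram[of "(\<beta> k ** Kmat) *v a" "(\<beta> k ** Kmat) *v b"]
    norm_parallelogram[of "vtop a" "vtop b"] norm_parallelogram[of "vbot a" "vbot b"]
  unfolding Cform_def jform_def matrix_vector_right_distrib matrix_vector_mult_diff_distrib
    vtop_add vtop_diff vbot_add vbot_diff
  by (simp add: algebra_simps)

definition growth_rate :: "complex \<Rightarrow> real" where
  "growth_rate z = - 2 * Im z / ((cmod z)\<^sup>2 + 1)"

lemma growth_rate_pos: "Im z < 0 \<Longrightarrow> 0 < growth_rate z"
  unfolding growth_rate_def by (intro divide_pos_pos) (simp_all add: add_nonneg_pos)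

lemma qfun_nonneg: "0 \<le> qfun z"
  by (simp add: qfun_def)

lemma Wsol_Suc_mv:
  "Wsol \<beta> (Suc k) z *v x = Wsol \<beta> k z *v x - (\<i> / z) *s (jmat *v (Cmat \<beta> k *v (Wsol \<beta> k z *v x)))"
  by (simp add: matrix_vector_mult_diff_rdistrib cmat_smult_mv flip: matrix_vector_mul_assoc)

lemma adj_Wsol_Suc_mv:
  "adj (Wsol \<beta> (Suc k) z) *v x = adj (Wsol \<beta> k z) *v (x - cnj (\<i> / z) *s (Cmat \<beta> k *v (jmat *v x)))"
proof -
  have "adj (Wsol \<beta> (Suc k) z) =
      adj (Wsol \<beta> k z) - cmat_smult (cnj (\<i> / z)) (adj (Wsol \<beta> k z) ** Cmat \<beta> k ** jmat)"
    by (simp add: adj_diff adj_cmat_smult adj_mult adj_Cmat adj_jmat matrix_mul_assoc)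
  then show ?thesis
    by (simp add: matrix_vector_mult_diff_rdistrib matrix_vector_mult_diff_distrib cmat_smult_mv
        matrix_vector_right_distrib vector_scalar_commute flip: matrix_vector_mul_assoc)
qed

definition weyl_term ::
    "(nat \<Rightarrow> complex^('p::finite + 'p)^'p) \<Rightarrow> complex \<Rightarrow> nat \<Rightarrow> complex^('p + 'p) \<Rightarrow> real" where
  "weyl_term \<beta> z k u = qfun z ^ k * Cform \<beta> k (Wsol \<beta> k z *v u)"

lemma weyl_term_smult: "weyl_term \<beta> z k (c *s u) = (cmod c)\<^sup>2 * weyl_term \<beta> z k u"
  by (simp add: weyl_term_def vector_scalar_commute Cform_smult algebra_simps)

locale discrete_system =
  fixes \<beta> :: "nat \<Rightarrow> complex^('p::finite + 'p)^'p"
  assumes beta_J: "\<And>k. \<beta> k ** Jmat ** adj (\<beta> k) = mat 1"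
begin

lemma betaK_jmat_adj_betaK: "(\<beta> k ** Kmat) ** jmat ** adj (\<beta> k ** Kmat) = mat 1"
proof -
  have "((\<beta> k ** Kmat) ** jmat ** adj (\<beta> k ** Kmat)) *v w = (\<beta> k ** Jmat ** adj (\<beta> k)) *v w" for w
    by (simp add: adj_mult flip: matrix_vector_mul_assoc) (simp add: Kmat_jmat_adj_Kmat_mv)
  then show ?thesis
    by (simp add: beta_J matrix_eq)
qed

lemma jform_le_Cform: "jform x \<le> Cform \<beta> k x"
  and Cform_nonneg: "0 \<le> Cform \<beta> k x"
  using jform_le_norm_power2[OF betaK_jmat_adj_betaK, of x k]
    zero_le_power2[of "norm ((\<beta> k ** Kmat) *v x)"]
  unfolding Cform_def by linarith+

text \<open>Since \<open>C\<^sub>k = 2 g\<^sup>* g - j\<close> with \<open>g = \<beta>(k) K\<close> and \<open>g j g\<^sup>* = I\<close>, \<open>j C\<^sub>k\<close> is an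
  involution.\<close>

lemma Cmat_jmat_Cmat_mv: "Cmat \<beta> k *v (jmat *v (Cmat \<beta> k *v x)) = jmat *v x"
proof -
  let ?g = "\<beta> k ** Kmat"
  have gjg: "?g *v (jmat *v (adj ?g *v w)) = w" for w
    using betaK_jmat_adj_betaK[of k] by (simp add: matrix_vector_mul_assoc matrix_mul_assoc)
  have "?g *v (jmat *v (Cmat \<beta> k *v x)) = ?g *v x"
    by (simp add: Cmat_mv matrix_vector_mult_diff_distrib vector_scalar_commute gjg)
      (simp add: vec_eq_iff)
  then show ?thesis
    by (simp add: Cmat_mv[of \<beta> k "jmat *v (Cmat \<beta> k *v x)"]) (simp add: Cmat_mv)
qed

lemma Cform_add_le: "Cform \<beta> k (a + b) \<le> 2 * Cform \<beta> k a + 2 * Cform \<beta> k b"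
  using Cform_parallelogram[of \<beta> k a b] Cform_nonneg[of k "a - b"] by linarith

lemma jform_step:
  assumes "z \<noteq> 0"
  shows "qfun z * jform (x - (\<i> / z) *s (jmat *v (Cmat \<beta> k *v x))) =
    jform x + growth_rate z * Cform \<beta> k x"
proof -
  define a where "a = \<i> / z"
  let ?y = "jmat *v (Cmat \<beta> k *v x)"
  have "of_real (jform (x - a *s ?y)) = cinner (x - a *s ?y) (jmat *v x - a *s (Cmat \<beta> k *v x))"
    by (simp add: cinner_jmat_self[symmetric] matrix_vector_mult_diff_distrib vector_scalar_commute)
  also have "\<dots> = (1 + cnj a * a) * cinner x (jmat *v x) - (a + cnj a) * cinner x (Cmat \<beta> k *v x)"
    by (simp add: cinner_simps cinner_jmat_left cinner_Cmat_left Cmat_jmat_Cmat_mv algebra_simps)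
  also have "\<dots> = of_real ((1 + (cmod a)\<^sup>2) * jform x - 2 * Re a * Cform \<beta> k x)"
    using complex_norm_square[of a]
    by (simp add: cinner_jmat_self cinner_Cmat_self complex_add_cnj mult.commute)
  finally have "jform (x - a *s ?y) = (1 + (cmod a)\<^sup>2) * jform x - 2 * Re a * Cform \<beta> k x"
    by (simp only: of_real_eq_iff)
  moreover have "(cmod a)\<^sup>2 = 1 / (cmod z)\<^sup>2" "Re a = Im z / (cmod z)\<^sup>2"
    by (simp_all add: a_def norm_divide power_divide Re_divide cmod_power2)
  ultimately have "qfun z * jform (x - a *s ?y) = (cmod z)\<^sup>2 / ((cmod z)\<^sup>2 + 1) *
      ((1 + 1 / (cmod z)\<^sup>2) * jform x - 2 * (Im z / (cmod z)\<^sup>2) * Cform \<beta> k x)"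
    by (simp only: qfun_def)
  also have "\<dots> = jform x + growth_rate z * Cform \<beta> k x"
  proof -
    have "n / (n + 1) * ((1 + 1 / n) * J - 2 * (m / n) * Q) = J + (- 2 * m / (n + 1)) * Q"
      if "n > 0" for n m J Q :: real
      using that by (simp add: divide_simps)
    then show ?thesis
      unfolding growth_rate_def using assms by simp
  qed
  finally show ?thesis
    by (simp only: a_def)
qed

lemma weyl_term_nonneg: "0 \<le> weyl_term \<beta> z k u"
  by (simp add: weyl_term_def Cform_nonneg qfun_nonneg)

lemma weyl_term_add_le: "weyl_term \<beta> z k (a + b) \<le> 2 * weyl_term \<beta> z k a + 2 * weyl_term \<beta> z k b"
proof -
  let ?W = "Wsol \<beta> k z"
  have "qfun z ^ k * Cform \<beta> k (?W *v a + ?W *v b) \<le>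
      qfun z ^ k * (2 * Cform \<beta> k (?W *v a) + 2 * Cform \<beta> k (?W *v b))"
    by (intro mult_left_mono Cform_add_le) (simp add: qfun_nonneg)
  then show ?thesis
    by (simp add: weyl_term_def matrix_vector_right_distrib algebra_simps)
qed

lemma summable_weyl_term_add_smult:
  assumes "summable (\<lambda>k. weyl_term \<beta> z k a)" and "summable (\<lambda>k. weyl_term \<beta> z k b)"
  shows "summable (\<lambda>k. weyl_term \<beta> z k (a + c *s b))"
proof (rule summable_comparison_test')
  show "summable (\<lambda>k. 2 * weyl_term \<beta> z k a + 2 * (cmod c)\<^sup>2 * weyl_term \<beta> z k b)"
    using assms by (intro summable_add summable_mult)
  show "norm (weyl_term \<beta> z k (a + c *s b)) \<le>
      2 * weyl_term \<beta> z k a + 2 * (cmod c)\<^sup>2 * weyl_term \<beta> z k b" for k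
    using weyl_term_add_le[of z k a "c *s b"] by (simp add: weyl_term_nonneg weyl_term_smult)
qed

lemma qfun_power_jform_Wsol:
  assumes "z \<noteq> 0"
  shows "qfun z ^ n * jform (Wsol \<beta> n z *v u) = jform u + growth_rate z * (\<Sum>k<n. weyl_term \<beta> z k u)"
proof (induction n)
  case 0
  then show ?case
    by simp
next
  case (Suc n)
  have "qfun z ^ Suc n * jform (Wsol \<beta> (Suc n) z *v u)
      = qfun z ^ n * (jform (Wsol \<beta> n z *v u) + growth_rate z * Cform \<beta> n (Wsol \<beta> n z *v u))"
    unfolding Wsol_Suc_mv by (simp add: power_Suc2 mult.assoc jform_step[OF assms] del: Wsol.simps)
  also have "\<dots> = jform u + growth_rate z * (\<Sum>k<Suc n. weyl_term \<beta> z k u)"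
    using Suc.IH by (simp add: weyl_term_def algebra_simps)
  finally show ?case .
qed

lemma jform_le_weyl_term:
  assumes z: "Im z < 0"
  shows "jform u \<le> weyl_term \<beta> z k u"
proof -
  have "z \<noteq> 0"
    using z by auto
  have "jform u \<le> jform u + growth_rate z * (\<Sum>j<k. weyl_term \<beta> z j u)"
    using growth_rate_pos[OF z] by (simp add: sum_nonneg weyl_term_nonneg)
  also have "\<dots> = qfun z ^ k * jform (Wsol \<beta> k z *v u)"
    by (rule qfun_power_jform_Wsol[OF \<open>z \<noteq> 0\<close>, symmetric])
  also have "\<dots> \<le> weyl_term \<beta> z k u"
    unfolding weyl_term_def by (intro mult_left_mono jform_le_Cform) (simp add: qfun_nonneg)
  finally show ?thesis .
qed

lemma jform_nonpos_if_summable_weyl_term: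
  assumes z: "Im z < 0" and summable: "summable (\<lambda>k. weyl_term \<beta> z k u)"
  shows "jform u \<le> 0"
  using summable_LIMSEQ_zero[OF summable] jform_le_weyl_term[OF z] by (intro LIMSEQ_le_const) auto

lemma summable_weyl_term_if_jform_nonpos:
  assumes z: "Im z < 0" and nonpos: "\<And>n. jform (Wsol \<beta> (Suc n) z *v u) \<le> 0"
  shows "summable (\<lambda>k. weyl_term \<beta> z k u)"
proof (rule summableI_nonneg_bounded)
  show "0 \<le> weyl_term \<beta> z k u" for k
    by (rule weyl_term_nonneg)
  have "z \<noteq> 0"
    using z by auto
  have bound: "(\<Sum>k<Suc n. weyl_term \<beta> z k u) \<le> - jform u / growth_rate z" for n
  proof -
    have "qfun z ^ Suc n * jform (Wsol \<beta> (Suc n) z *v u) \<le> 0"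
      by (intro mult_nonneg_nonpos zero_le_power qfun_nonneg nonpos)
    then have "growth_rate z * (\<Sum>k<Suc n. weyl_term \<beta> z k u) \<le> - jform u"
      using qfun_power_jform_Wsol[OF \<open>z \<noteq> 0\<close>, of "Suc n" u] by linarith
    then show ?thesis
      using growth_rate_pos[OF z] by (metis pos_le_divide_eq mult.commute)
  qed
  show "(\<Sum>k<n. weyl_term \<beta> z k u) \<le> - jform u / growth_rate z" for n
    using bound[of n] weyl_term_nonneg[of z n u] by simp
qed

end

section \<open>Weyl vectors and the Weyl series\<close>

definition weyl_vec :: "complex^'p^'p \<Rightarrow> complex^'p \<Rightarrow> complex^('p::finite + 'p)" where
  "weyl_vec \<Phi> y = adj Kmat *v vstack ((- \<i>) *s (\<Phi> *v y)) y"

lemma weyl_vec_mv: "weyl_vec \<Phi> y = (adj Kmat ** col2 (cmat_smult (- \<i>) \<Phi>) (mat 1)) *v y"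
  by (simp add: weyl_vec_def col2_mv cmat_smult_mv flip: matrix_vector_mul_assoc)

lemma Kmat_weyl_vec: "Kmat *v weyl_vec \<Phi> y = vstack ((- \<i>) *s (\<Phi> *v y)) y"
  by (simp add: weyl_vec_def)

definition weyl_summand ::
    "(nat \<Rightarrow> complex^('p::finite + 'p)^'p) \<Rightarrow> complex \<Rightarrow> complex^'p^'p \<Rightarrow> nat \<Rightarrow> complex^'p^'p" where
  "weyl_summand \<beta> z \<Phi> k = row2 (cmat_smult \<i> (adj \<Phi>)) (mat 1) **
     ((qfun z ^ k) *\<^sub>R (Kmat ** adj (Wsol \<beta> k z) ** Cmat \<beta> k ** Wsol \<beta> k z ** adj Kmat)) **
     col2 (cmat_smult (- \<i>) \<Phi>) (mat 1)"

lemma cinner_weyl_summand: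
  "cinner y (weyl_summand \<beta> z \<Phi> k *v y) = of_real (weyl_term \<beta> z k (weyl_vec \<Phi> y))"
proof -
  let ?G = "col2 (cmat_smult (- \<i>) \<Phi>) (mat 1)"
  have row: "row2 (cmat_smult \<i> (adj \<Phi>)) (mat 1) = adj ?G"
    by (simp add: adj_col2 adj_cmat_smult adj_mat_1)
  have vec: "adj Kmat *v (?G *v y) = weyl_vec \<Phi> y"
    by (simp add: weyl_vec_mv matrix_vector_mul_assoc)
  show ?thesis
    unfolding weyl_summand_def row
    by (simp add: cinner_adj_right scaleR_mv cinner_scaleR_right cinner_mv_right[of _ Kmat] vec
        weyl_term_def cinner_Cmat_self flip: matrix_vector_mul_assoc)
qed

lemma summable_matrix_entrywise:
  fixes f :: "nat \<Rightarrow> complex^'n^'m"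
  assumes "\<And>i j. summable (\<lambda>k. f k $ i $ j)"
  shows "summable f"
proof -
  define s where "s = (\<chi> i j. \<Sum>k. f k $ i $ j)"
  have "f sums s"
    unfolding sums_def
  proof (intro vec_tendstoI)
    fix i j
    show "((\<lambda>n. (\<Sum>k<n. f k) $ i $ j) \<longlongrightarrow> s $ i $ j) sequentially"
      using summable_LIMSEQ[OF assms[of i j]] by (simp add: s_def)
  qed
  then show ?thesis
    by (auto simp: summable_def)
qed

lemma cinner_axis_mv: "cinner (axis a 1) (M *v axis b 1) = M $ a $ b"
proof -
  have "(M *v axis b 1) $ i = (\<Sum>j\<in>UNIV. if j = b then M $ i $ j else 0)" for i
    unfolding matrix_vector_mult_def axis_def vec_lambda_beta by (rule sum.cong) auto
  then have "cinner (axis a 1) (M *v axis b 1) = (\<Sum>i\<in>UNIV. if i = a then M $ i $ b else 0)"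
    unfolding cinner_def by (intro sum.cong) (auto simp: axis_def)
  then show ?thesis
    by simp
qed

lemma matrix_entry_polarization:
  fixes M :: "complex^'n^'n"
  defines "e a \<equiv> axis a (1::complex)"
  shows "M $ a $ b =
    (cinner (e a + e b) (M *v (e a + e b)) - cinner (e a) (M *v e a) - cinner (e b) (M *v e b)
      - \<i> * (cinner (e a + \<i> *s e b) (M *v (e a + \<i> *s e b)) - cinner (e a) (M *v e a)
      - cinner (e b) (M *v e b))) / 2"
  by (simp add: e_def matrix_vector_right_distrib vector_scalar_commute cinner_simps cinner_axis_mv
      field_simps)

lemma summable_matrix_iff_cinner:
  fixes f :: "nat \<Rightarrow> complex^'n^'n"
  shows "summable f \<longleftrightarrow> (\<forall>y. summable (\<lambda>k. cinner y (f k *v y)))"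
proof
  assume "summable f"
  then have "summable (\<lambda>k. f k $ i $ j)" for i j
    by (intro summable_vec_nth)
  then show "\<forall>y. summable (\<lambda>k. cinner y (f k *v y))"
    unfolding cinner_def matrix_vector_mult_def
    by (simp add: sum_distrib_left) (intro allI summable_sum summable_mult summable_mult2)
next
  assume "\<forall>y. summable (\<lambda>k. cinner y (f k *v y))"
  then show "summable f"
    by (intro summable_matrix_entrywise, subst matrix_entry_polarization)
      (intro summable_divide summable_diff summable_mult, auto)
qed

lemma weyl_function_iff_summable_weyl_term:
  "weyl_function \<beta> \<phi> \<longleftrightarrow>
    mat_holomorphic_on \<phi> lhp \<and> (\<forall>z\<in>lhp. \<forall>y. summable (\<lambda>k. weyl_term \<beta> z k (weyl_vec (\<phi> z) y)))"
proof -
  have "summable (weyl_summand \<beta> z (\<phi> z)) \<longleftrightarrow>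
      (\<forall>y. summable (\<lambda>k. weyl_term \<beta> z k (weyl_vec (\<phi> z) y)))" for z
    by (simp add: summable_matrix_iff_cinner cinner_weyl_summand summable_of_real_iff)
  then show ?thesis
    unfolding weyl_function_def weyl_summand_def by simp
qed

context discrete_system
begin

lemma weyl_vec_unique:
  assumes z: "Im z < 0"
    and summable1: "\<And>y. summable (\<lambda>k. weyl_term \<beta> z k (weyl_vec \<Phi>\<^sub>1 y))"
    and summable2: "\<And>y. summable (\<lambda>k. weyl_term \<beta> z k (weyl_vec \<Phi>\<^sub>2 y))"
  shows "\<Phi>\<^sub>1 = \<Phi>\<^sub>2"
proof -
  have "\<Phi>\<^sub>1 *v x = \<Phi>\<^sub>2 *v x" for x
  proof -
    define G where "G = adj Kmat ** col2 (cmat_smult (- \<i>) \<Phi>\<^sub>1) (mat 1)"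
    obtain y t where yt: "y \<noteq> 0 \<or> t \<noteq> 0"
      and bot: "(\<chi> a c. G $ Inr a $ c) *v y + t *s vbot (weyl_vec \<Phi>\<^sub>2 x) = 0"
      using matrix_column_dependence by blast
    define u where "u = weyl_vec \<Phi>\<^sub>1 y + t *s weyl_vec \<Phi>\<^sub>2 x"
    have "vbot u = 0"
      using bot by (simp add: u_def weyl_vec_mv[of \<Phi>\<^sub>1] G_def[symmetric] vbot_mv)
    moreover have "jform u \<le> 0"
      unfolding u_def
      by (rule jform_nonpos_if_summable_weyl_term[OF z])
        (intro summable_weyl_term_add_smult summable1 summable2)
    ultimately have "vtop u = 0"
      by (simp add: jform_def)
    with \<open>vbot u = 0\<close> have "Kmat *v u = 0"
      by (metis vstack_vtop_vbot vstack_eq_0_iff matrix_vector_mult_0_right)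
    then have top: "(- \<i>) *s (\<Phi>\<^sub>1 *v y) + t *s ((- \<i>) *s (\<Phi>\<^sub>2 *v x)) = 0" and bot: "y + t *s x = 0"
      by (simp_all add: u_def matrix_vector_right_distrib vector_scalar_commute Kmat_weyl_vec
          vstack_smult vstack_add vstack_eq_0_iff)
    from bot have y: "y = (- t) *s x"
      by (simp add: vec_eq_iff add_eq_0_iff)
    with yt have "t \<noteq> 0"
      by auto
    have "\<Phi>\<^sub>1 *v y = (- t) *s (\<Phi>\<^sub>1 *v x)"
      by (simp only: y vector_scalar_commute)
    with top have "(\<i> * t) *s (\<Phi>\<^sub>1 *v x - \<Phi>\<^sub>2 *v x) = 0"
      by (simp add: vec_eq_iff algebra_simps)
    with \<open>t \<noteq> 0\<close> show ?thesis
      by (simp add: vector_mul_eq_0)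
  qed
  then show ?thesis
    by (simp add: matrix_eq)
qed

end

lemma continuous_on_matrix_vector_mult [continuous_intros]:
  fixes A :: "'a::topological_space \<Rightarrow> complex^'n^'m"
  assumes "continuous_on S A" and "continuous_on S x"
  shows "continuous_on S (\<lambda>w. A w *v x w)"
  unfolding matrix_vector_mult_def by (intro continuous_intros assms)

lemma continuous_on_matrix_matrix_mult [continuous_intros]:
  fixes A :: "'a::topological_space \<Rightarrow> complex^'n^'m"
  assumes "continuous_on S A" and "continuous_on S B"
  shows "continuous_on S (\<lambda>w. A w ** B w)"
  unfolding matrix_matrix_mult_def by (intro continuous_intros assms)

lemma continuous_on_vstack [continuous_intros]:
  fixes a b :: "'a::topological_space \<Rightarrow> 'b::topological_space^'p::finite"
  assumes "continuous_on S a" and "continuous_on S b"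
  shows "continuous_on S (\<lambda>w. vstack (a w) (b w))"
  unfolding vstack_def
proof (intro continuous_on_vec_lambda)
  fix i :: "'p + 'p"
  show "continuous_on S (\<lambda>w. case i of Inl k \<Rightarrow> a w $ k | Inr k \<Rightarrow> b w $ k)"
    by (cases i) (simp_all add: continuous_on_component assms)
qed

lemma continuous_on_jform [continuous_intros]:
  "continuous_on S x \<Longrightarrow> continuous_on S (\<lambda>w. jform (x w))"
  unfolding jform_def vtop_def vbot_def by (intro continuous_intros)

lemma continuous_on_weyl_vec:
  "continuous_on S \<Phi> \<Longrightarrow> continuous_on S (\<lambda>w. weyl_vec (\<Phi> w) y)"
  unfolding weyl_vec_def vector_scalar_mult_def by (intro continuous_intros)

lemma mat_holomorphic_on_imp_continuous_on:
  assumes "mat_holomorphic_on F S"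
  shows "continuous_on S F"
proof -
  have "continuous_on S (\<lambda>z. \<chi> i j. F z $ i $ j)"
    using assms unfolding mat_holomorphic_on_def
    by (intro continuous_intros holomorphic_on_imp_continuous_on) auto
  then show ?thesis
    by simp
qed

lemma open_lhp: "open lhp"
  by (simp add: lhp_def open_halfspace_Im_lt)

lemma continuous_on_Wsol: "continuous_on lhp (\<lambda>z. Wsol \<beta> n z)"
proof (induction n)
  case 0
  show ?case
    by simp
next
  case (Suc n)
  show ?case
    unfolding Wsol.simps cmat_smult_def
    by (intro continuous_intros Suc.IH) (auto simp: lhp_def)
qed

lemma eventually_mat_analytic_at:
  assumes "mat_meromorphic_on R S" and "z \<in> S"
  shows "eventually (\<lambda>w. mat_analytic_at R w) (at z)"
proof -
  have "eventually (\<lambda>w. (\<lambda>w. R w $ i $ j) analytic_on {w}) (at z)" for i j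
  proof -
    have "(\<lambda>w. R w $ i $ j) meromorphic_on {z}"
      using assms unfolding mat_meromorphic_on_def
      by (meson empty_subsetI insert_subset meromorphic_on_subset)
    then show ?thesis
      using meromorphic_on_isolated_singularity isolated_singularity_at_altdef by blast
  qed
  then show ?thesis
    unfolding mat_analytic_at_def by (intro eventually_all_finite)
qed

section \<open>The classes \<N>(N)\<close>

context discrete_system
begin

lemma Wsol_jmat_adj_Wsol_mv:
  assumes w: "w \<noteq> 0"
  shows "Wsol \<beta> n w *v (jmat *v (adj (Wsol \<beta> n (cnj w)) *v c)) = (1 + 1 / w\<^sup>2) ^ n *s (jmat *v c)"
proof (induction n arbitrary: c)
  case 0
  show ?case
    by (simp add: adj_mat_1)
next
  case (Suc n)
  define a where "a = \<i> / w"
  define s where "s = (1 + 1 / w\<^sup>2) ^ n"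
  define P where "P = jmat *v c"
  define Q where "Q = jmat *v (Cmat \<beta> n *v P)"
  define b where "b = c + a *s (Cmat \<beta> n *v (jmat *v c))"
  have "c - cnj (\<i> / cnj w) *s (Cmat \<beta> n *v (jmat *v c)) = b"
    by (simp add: a_def b_def vec_eq_iff)
  moreover have "jmat *v b = P + a *s Q"
    by (simp add: b_def P_def Q_def matrix_vector_right_distrib vector_scalar_commute)
  moreover have "jmat *v (Cmat \<beta> n *v (P + a *s Q)) = Q + a *s P"
    by (simp add: Q_def P_def matrix_vector_right_distrib vector_scalar_commute Cmat_jmat_Cmat_mv)
  ultimately have "Wsol \<beta> (Suc n) w *v (jmat *v (adj (Wsol \<beta> (Suc n) (cnj w)) *v c))
      = s *s (P + a *s Q) - a *s (s *s (Q + a *s P))"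
    by (simp only: adj_Wsol_Suc_mv Wsol_Suc_mv Suc.IH s_def a_def vector_scalar_commute)
  also have "\<dots> = (s * (1 + 1 / w\<^sup>2)) *s P"
  proof -
    have "1 + 1 / w\<^sup>2 = 1 - a * a"
      using w by (simp add: a_def field_simps power2_eq_square)
    then show ?thesis
      by (simp add: vec_eq_iff) (simp add: algebra_simps)
  qed
  finally show ?case
    by (simp add: s_def P_def mult.commute)
qed

text \<open>By the identity above, \<open>W\<^sub>N\<^sub>+\<^sub>1(w)\<close> maps \<open>weyl_vec \<Phi> y\<close> to a multiple of
  \<open>j [R \<xi>; Q \<xi>]\<close>, whose \<open>j\<close>-form is \<open>|R \<xi>|\<^sup>2 - |Q \<xi>|\<^sup>2 \<le> 0\<close>.\<close>

lemma jform_Wsol_weyl_vec_nonpos_at: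
  assumes w: "w \<noteq> 0"
    and le: "loewner_le (adj R ** R) (adj Q ** Q)"
    and inv: "invertible (blk11 (Wcal \<beta> N w) ** R + blk12 (Wcal \<beta> N w) ** Q)"
    and \<Phi>: "\<Phi> = cmat_smult \<i> ((blk21 (Wcal \<beta> N w) ** R + blk22 (Wcal \<beta> N w) ** Q) **
                    matrix_inv (blk11 (Wcal \<beta> N w) ** R + blk12 (Wcal \<beta> N w) ** Q))"
  shows "jform (Wsol \<beta> (Suc N) w *v weyl_vec \<Phi> y) \<le> 0"
proof -
  let ?W = "Wcal \<beta> N w"
  define X where "X = blk11 ?W ** R + blk12 ?W ** Q"
  define Y where "Y = blk21 ?W ** R + blk22 ?W ** Q"
  define \<xi> where "\<xi> = matrix_inv X *v y"
  define c where "c = vstack (R *v \<xi>) (Q *v \<xi>)"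
  have "X *v \<xi> = y"
    using matrix_inv_right[OF inv[folded X_def]] by (simp add: \<xi>_def matrix_vector_mul_assoc)
  moreover have "(- \<i>) *s (\<Phi> *v y) = Y *v \<xi>"
    unfolding \<Phi> X_def[symmetric] Y_def[symmetric] \<xi>_def
    by (simp add: cmat_smult_mv vec_eq_iff flip: matrix_vector_mul_assoc)
  moreover have "?W *v c = vstack (X *v \<xi>) (Y *v \<xi>)"
    by (simp add: c_def mv_vstack X_def Y_def matrix_vector_mult_add_rdistrib
        flip: matrix_vector_mul_assoc)
  ultimately have "weyl_vec \<Phi> y = adj Kmat *v (Jmat *v (?W *v c))"
    by (simp add: weyl_vec_def Jmat_mv)
  also have "\<dots> = jmat *v (adj (Wsol \<beta> (Suc N) (cnj w)) *v c)"
    by (simp add: Wcal_def adj_Kmat_Jmat_Kmat_mv flip: matrix_vector_mul_assoc)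
  finally have W: "Wsol \<beta> (Suc N) w *v weyl_vec \<Phi> y = (1 + 1 / w\<^sup>2) ^ Suc N *s (jmat *v c)"
    by (simp only: Wsol_jmat_adj_Wsol_mv[OF w])
  have "jform (Wsol \<beta> (Suc N) w *v weyl_vec \<Phi> y)
      = (cmod ((1 + 1 / w\<^sup>2) ^ Suc N))\<^sup>2 * ((norm (R *v \<xi>))\<^sup>2 - (norm (Q *v \<xi>))\<^sup>2)"
    unfolding W by (simp add: jform_smult jform_jmat c_def jform_vstack)
  moreover have "(norm (R *v \<xi>))\<^sup>2 \<le> (norm (Q *v \<xi>))\<^sup>2"
  proof -
    have "0 \<le> Re (cinner \<xi> ((adj Q ** Q - adj R ** R) *v \<xi>))"
      using le unfolding loewner_le_def psd_def cinner_def by blast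
    also have "cinner \<xi> ((adj Q ** Q - adj R ** R) *v \<xi>) =
        of_real ((norm (Q *v \<xi>))\<^sup>2 - (norm (R *v \<xi>))\<^sup>2)"
      by (simp add: matrix_vector_mult_diff_rdistrib cinner_simps cinner_adj_right cinner_self
          flip: matrix_vector_mul_assoc)
    finally show ?thesis
      by simp
  qed
  ultimately show ?thesis
    by (simp add: mult_nonneg_nonpos)
qed

text \<open>\<open>R\<close> and \<open>Q\<close> may have poles; the inequality passes to them by continuity.\<close>

lemma jform_Wsol_weyl_vec_nonpos:
  assumes \<phi>: "\<phi> \<in> Ncal \<beta> N" and z: "z \<in> lhp"
  shows "jform (Wsol \<beta> (Suc N) z *v weyl_vec (\<phi> z) y) \<le> 0"
proof -
  let ?f = "\<lambda>w. jform (Wsol \<beta> (Suc N) w *v weyl_vec (\<phi> w) y)"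
  obtain R Q :: "complex \<Rightarrow> complex^'p^'p"
    where R: "mat_meromorphic_on R lhp" and Q: "mat_meromorphic_on Q lhp"
    and rep: "\<forall>w\<in>lhp. mat_analytic_at R w \<and> mat_analytic_at Q w \<longrightarrow>
           pd (adj (R w) ** R w + adj (Q w) ** Q w) \<and>
           loewner_le (adj (R w) ** R w) (adj (Q w) ** Q w) \<and>
           invertible (blk11 (Wcal \<beta> N w) ** R w + blk12 (Wcal \<beta> N w) ** Q w) \<and>
           \<phi> w = cmat_smult \<i> ((blk21 (Wcal \<beta> N w) ** R w + blk22 (Wcal \<beta> N w) ** Q w) **
                    matrix_inv (blk11 (Wcal \<beta> N w) ** R w + blk12 (Wcal \<beta> N w) ** Q w))"
    using \<phi> unfolding Ncal_def by blast
  have "eventually (\<lambda>w. ?f w \<le> 0) (at z)"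
    using eventually_at_in_open'[OF open_lhp z] eventually_mat_analytic_at[OF R z]
      eventually_mat_analytic_at[OF Q z]
  proof eventually_elim
    case (elim w)
    then have "w \<noteq> 0"
      by (auto simp: lhp_def)
    with elim rep show ?case
      using jform_Wsol_weyl_vec_nonpos_at by blast
  qed
  moreover have "continuous_on lhp ?f"
    using \<phi> unfolding Ncal_def
    by (intro continuous_intros continuous_on_Wsol continuous_on_weyl_vec
        mat_holomorphic_on_imp_continuous_on) auto
  then have "(?f \<longlongrightarrow> ?f z) (at z)"
    using z open_lhp continuous_on_eq_continuous_at isCont_def by blast
  ultimately show ?thesis
    by (intro tendsto_upperbound[where F = "at z"]) auto
qed

end

theorem theorem6p5:
  fixes \<beta> :: "nat \<Rightarrow> complex^('p::finite + 'p)^'p"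
    and \<phi>inf :: "complex \<Rightarrow> complex^'p^'p"
  assumes beta_J: "\<And>k. \<beta> k ** Jmat ** adj (\<beta> k) = mat 1"
    and phi_inf_mem: "\<phi>inf \<in> (\<Inter>N. Ncal \<beta> N)"
  shows "weyl_function \<beta> \<phi>inf \<and>
         (\<forall>\<phi>. weyl_function \<beta> \<phi> \<longrightarrow> (\<forall>z\<in>lhp. \<phi> z = \<phi>inf z))"
proof -
  interpret discrete_system \<beta>
    using beta_J by unfold_locales
  have "summable (\<lambda>k. weyl_term \<beta> z k (weyl_vec (\<phi>inf z) y))" if "z \<in> lhp" for z y
    using that phi_inf_mem
    by (intro summable_weyl_term_if_jform_nonpos jform_Wsol_weyl_vec_nonpos) (auto simp: lhp_def)
  moreover have "mat_holomorphic_on \<phi>inf lhp"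
    using phi_inf_mem by (auto simp: Ncal_def)
  ultimately have "weyl_function \<beta> \<phi>inf"
    by (simp add: weyl_function_iff_summable_weyl_term)
  moreover have "\<phi> z = \<phi>inf z" if "weyl_function \<beta> \<phi>" and "z \<in> lhp" for \<phi> z
    using that \<open>weyl_function \<beta> \<phi>inf\<close>
    by (intro weyl_vec_unique) (auto simp: weyl_function_iff_summable_weyl_term lhp_def)
  ultimately show ?thesis
    by blast
qed

end
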